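(* Let $\Gamma$ be a countably infinite residually finite group and $\{\Gamma_n\}_{n\in\mathbb N}$ a strictly decreasing sequence of finite-index normal subgroups with $\bigcap_n\Gamma_n=\{e_\Gamma\}$ and $[\Gamma_n:\Gamma_{n+1}]>2$ for all $n$. Let $X=\varprojlim\Gamma/\Gamma_n$ with the left translation action of $\Gamma$ and quotient maps $\pi_n:X\to\Gamma/\Gamma_n$. For $n\ge2$ choose $\gamma_n\in\Gamma_{n-1}\setminus\Gamma_n$, let $C_n=\pi_n^{-1}(\gamma_n\Gamma_n)$, $X_+=\bigcup_{n\ge2}C_n$, $X_-=X\setminus(X_+\cup\{e_\Gamma\})$, and define $f:X\setminus\{e_\Gamma\}\to\{1,-1\}$ by $f=1$ on $X_+$ and $f=-1$ on $X_-$. Then the McMahon extension action $\Gamma\curvearrowright X_f$ associated to $(X, e_\Gamma, f)$ is null.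
   Context: $X=\varprojlim\Gamma/\Gamma_n$ is the compact metrizable group of compatible sequences in $\prod_n\Gamma/\Gamma_n$; $\Gamma$ embeds densely and acts minimally and freely by left translation. Under the hypotheses, $f$ is continuous and cannot be extended continuously to $X$. McMahon extension: the (unique up to conjugacy) minimal continuous action $\Gamma\curvearrowright X_f$ on a compact metrizable space with a $\Gamma$-equivariant continuous surjection $\pi_f:X_f\to X$ such that $\pi_f^{-1}(x)$ is one point for $x\notin\Gamma e_\Gamma$ and two points for $x\in\Gamma e_\Gamma$, and $f\circ\pi_f$ on $X_f\setminus\pi_f^{-1}(e_\Gamma)$ extends continuously to $X_f$. Null: for every sequence $\{s_n\}$ in $\Gamma$ and finite open cover $\mathcal U$, $\limsup_n\frac1n\log N(\bigvee_{i=1}^n s_i^{-1}\mathcal U)=0$, $N$ the minimal subcover size. *)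

theory Defs
  imports "HOL-Algebra.Algebra" "HOL-Analysis.Analysis" "HOL-Library.Liminf_Limsup"
begin

definition residually_finite :: "('a, 'c) monoid_scheme \<Rightarrow> bool" where
  "residually_finite G \<longleftrightarrow>
     (\<forall>g \<in> carrier G. g \<noteq> \<one>\<^bsub>G\<^esub> \<longrightarrow>
        (\<exists>N. N \<lhd> G \<and> finite (rcosets\<^bsub>G\<^esub> N) \<and> g \<notin> N))"

definition invlim :: "('a, 'c) monoid_scheme \<Rightarrow> (nat \<Rightarrow> 'a set) \<Rightarrow> (nat \<Rightarrow> 'a set) set" where
  "invlim G Gam = {x. (\<forall>n. x n \<in> rcosets\<^bsub>G\<^esub> (Gam n)) \<and> (\<forall>n. x (Suc n) \<subseteq> x n)}"

definition invlim_top :: "('a, 'c) monoid_scheme \<Rightarrow> (nat \<Rightarrow> 'a set) \<Rightarrow> (nat \<Rightarrow> 'a set) topology" where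
  "invlim_top G Gam =
     subtopology (product_topology (\<lambda>n. discrete_topology (rcosets\<^bsub>G\<^esub> (Gam n))) UNIV)
                 (invlim G Gam)"

definition invlim_act :: "('a, 'c) monoid_scheme \<Rightarrow> 'a \<Rightarrow> (nat \<Rightarrow> 'a set) \<Rightarrow> (nat \<Rightarrow> 'a set)" where
  "invlim_act G g x = (\<lambda>n. g <#\<^bsub>G\<^esub> x n)"

text \<open>The identity point e of X is the sequence of trivial cosets, i.e. Gam itself.
  The quotient map pi_n is evaluation at n.  Indexing: Isabelle index n corresponds to
  the paper's index n+1, so the paper's C_n (n >= 2) is Cset ... n with n >= 1.\<close>
definition Cset :: "('a, 'c) monoid_scheme \<Rightarrow> (nat \<Rightarrow> 'a set) \<Rightarrow> (nat \<Rightarrow> 'a) \<Rightarrow> nat \<Rightarrow> (nat \<Rightarrow> 'a set) set" where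
  "Cset G Gam \<gamma> n = {x \<in> invlim G Gam. x n = Gam n #>\<^bsub>G\<^esub> \<gamma> n}"

definition Xplus :: "('a, 'c) monoid_scheme \<Rightarrow> (nat \<Rightarrow> 'a set) \<Rightarrow> (nat \<Rightarrow> 'a) \<Rightarrow> (nat \<Rightarrow> 'a set) set" where
  "Xplus G Gam \<gamma> = (\<Union>n\<in>{1..}. Cset G Gam \<gamma> n)"

text \<open>f = 1 on X_+ and -1 on X_- (its value at e is irrelevant, it is never used).\<close>
definition fsign :: "('a, 'c) monoid_scheme \<Rightarrow> (nat \<Rightarrow> 'a set) \<Rightarrow> (nat \<Rightarrow> 'a) \<Rightarrow> (nat \<Rightarrow> 'a set) \<Rightarrow> real" where
  "fsign G Gam \<gamma> x = (if x \<in> Xplus G Gam \<gamma> then 1 else -1)"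

definition continuous_action :: "('a, 'c) monoid_scheme \<Rightarrow> 'b topology \<Rightarrow> ('a \<Rightarrow> 'b \<Rightarrow> 'b) \<Rightarrow> bool" where
  "continuous_action G Y T \<longleftrightarrow>
     (\<forall>g \<in> carrier G. continuous_map Y Y (T g)) \<and>
     (\<forall>y \<in> topspace Y. T \<one>\<^bsub>G\<^esub> y = y) \<and>
     (\<forall>g \<in> carrier G. \<forall>h \<in> carrier G. \<forall>y \<in> topspace Y. T (g \<otimes>\<^bsub>G\<^esub> h) y = T g (T h y))"

definition minimal_action :: "('a, 'c) monoid_scheme \<Rightarrow> 'b topology \<Rightarrow> ('a \<Rightarrow> 'b \<Rightarrow> 'b) \<Rightarrow> bool" where
  "minimal_action G Y T \<longleftrightarrow>
     (\<forall>A. closedin Y A \<and> (\<forall>g \<in> carrier G. T g ` A \<subseteq> A) \<longrightarrow> A = {} \<or> A = topspace Y)"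

definition is_McMahon_extension ::
  "('a, 'c) monoid_scheme \<Rightarrow> 'x topology \<Rightarrow> ('a \<Rightarrow> 'x \<Rightarrow> 'x) \<Rightarrow> 'x \<Rightarrow> ('x \<Rightarrow> real)
     \<Rightarrow> 'b topology \<Rightarrow> ('a \<Rightarrow> 'b \<Rightarrow> 'b) \<Rightarrow> ('b \<Rightarrow> 'x) \<Rightarrow> bool" where
  "is_McMahon_extension G XT Tx e f Y T p \<longleftrightarrow>
     compact_space Y \<and> metrizable_space Y \<and>
     continuous_action G Y T \<and> minimal_action G Y T \<and>
     continuous_map Y XT p \<and> p ` topspace Y = topspace XT \<and>
     (\<forall>g \<in> carrier G. \<forall>y \<in> topspace Y. p (T g y) = Tx g (p y)) \<and>
     (\<forall>x \<in> topspace XT. x \<notin> {Tx g e | g. g \<in> carrier G} \<longrightarrow> card {y \<in> topspace Y. p y = x} = 1) \<and>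
     (\<forall>x \<in> {Tx g e | g. g \<in> carrier G}. card {y \<in> topspace Y. p y = x} = 2) \<and>
     (\<exists>F. continuous_map Y euclideanreal F \<and>
          (\<forall>y \<in> topspace Y. p y \<noteq> e \<longrightarrow> F y = f (p y)))"

definition cover_join :: "('a, 'c) monoid_scheme \<Rightarrow> ('a \<Rightarrow> 'b \<Rightarrow> 'b) \<Rightarrow> (nat \<Rightarrow> 'a) \<Rightarrow> 'b set set \<Rightarrow> nat \<Rightarrow> 'b set set" where
  "cover_join G T s \<U> n =
     {\<Inter>i\<in>{1..n}. V i | V. \<forall>i\<in>{1..n}. V i \<in> (\<lambda>U. T (inv\<^bsub>G\<^esub> (s i)) ` U) ` \<U>}"

definition min_subcover :: "'b topology \<Rightarrow> 'b set set \<Rightarrow> nat" where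
  "min_subcover Y \<V> = (LEAST k. \<exists>\<W> \<subseteq> \<V>. finite \<W> \<and> card \<W> = k \<and> topspace Y \<subseteq> \<Union>\<W>)"

definition null_action :: "('a, 'c) monoid_scheme \<Rightarrow> 'b topology \<Rightarrow> ('a \<Rightarrow> 'b \<Rightarrow> 'b) \<Rightarrow> bool" where
  "null_action G Y T \<longleftrightarrow>
     (\<forall>s \<U>. (\<forall>n. s n \<in> carrier G) \<and> finite \<U> \<and> (\<forall>U \<in> \<U>. openin Y U) \<and> \<Union>\<U> = topspace Y \<longrightarrow>
        limsup (\<lambda>n. ereal (ln (real (min_subcover Y (cover_join G T s \<U> n))) / real n)) = 0)"

end

theory Submission
  imports Defs "HOL-Real_Asymp.Real_Asymp"
begin

(*
  The factor map p identifies Y with a subspace of X x {1,-1}^Gamma: a point y is determined by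
  p y and the signs F (T g y).  Hence, by compactness, every open cover of Y is refined by the
  partition according to finitely many cosets p y N and finitely many signs F (T h y), and the
  join of n translates of the cover by the partition according to finitely many cosets and the
  signs on a set S of O(n) group elements.
  Away from the orbit of the base point, F (T g y) = 1 iff p y lies in g^-1 X_+, and whether a
  point x of X lies in b X_+ is decided at the level where x leaves the branch of b in the tree
  of cosets.  So the sign pattern of y on S is determined by two nodes of the finite subtree
  spanned by the branches of S^-1, and there are only O(|S|^4) patterns.  Thus the minimal
  subcovers of the joins grow polynomially in n, and the sequence entropy vanishes.
*)

section \<open>Counting and growth\<close>

lemma card_range_chain_le:
  fixes A :: "nat \<Rightarrow> 'a set"
  assumes "finite S" and "\<And>k. A k \<subseteq> S" and "\<And>k k'. k \<le> k' \<Longrightarrow> A k' \<subseteq> A k"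
  shows "card (range A) \<le> card S + 1"
proof -
  have fin: "finite (A k)" for k
    using assms(1,2) finite_subset by blast
  have "inj_on card (range A)"
  proof (rule inj_onI, clarify)
    fix k k' assume "card (A k) = card (A k')"
    with assms(3)[of k k'] assms(3)[of k' k] fin show "A k = A k'"
      by (cases "k \<le> k'") (auto dest: card_subset_eq[rotated])
  qed
  then have "card (range A) = card (card ` range A)"
    by (simp add: card_image)
  also have "\<dots> \<le> card {0..card S}"
    using card_mono[OF assms(1,2)] by (intro card_mono) auto
  finally show ?thesis
    by simp
qed

lemma limsup_ln_div_eq_0_if_poly_bounded:
  fixes M :: "nat \<Rightarrow> nat"
  assumes bound: "\<And>n. M n \<le> B * (n + 1) ^ k"
  shows "limsup (\<lambda>n. ereal (ln (real (M n)) / real n)) = 0"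
proof -
  define a where "a n = ln (real (M n)) / real n" for n
  define b where "b n = (ln (real B + 1) + real k * ln (real n + 1)) / real n" for n
  have "a n \<le> b n" if "n \<ge> 1" for n
  proof -
    have "ln (real (M n)) \<le> ln ((real B + 1) * (real n + 1) ^ k)"
    proof (cases "M n = 0")
      case False
      have "real (M n) \<le> real B * (real n + 1) ^ k"
        using bound[of n] by (metis of_nat_1 of_nat_add of_nat_le_iff of_nat_mult of_nat_power)
      also have "\<dots> \<le> (real B + 1) * (real n + 1) ^ k"
        by (simp add: mult_right_mono)
      finally show ?thesis
        using False by simp
    qed (use mult_mono[of 1 "real B + 1" 1 "(real n + 1) ^ k"] in \<open>simp add: one_le_power\<close>)
    then show ?thesis
      using that by (simp add: a_def b_def ln_mult ln_realpow divide_right_mono)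
  qed
  then have "\<forall>\<^sub>F n in sequentially. a n \<le> b n"
    using eventually_sequentially by blast
  moreover have "0 \<le> a n" for n
    unfolding a_def by (cases "M n = 0") simp_all
  moreover have "b \<longlonglongrightarrow> 0"
    unfolding b_def by real_asymp
  ultimately have "a \<longlonglongrightarrow> 0"
    using tendsto_sandwich[of "\<lambda>_. 0" a sequentially b] by (simp add: always_eventually)
  then show ?thesis
    unfolding a_def by (simp add: lim_imp_Limsup zero_ereal_def)
qed

section \<open>Group actions on compact spaces\<close>

lemma continuous_action_in_topspace:
  "continuous_action G Y T \<Longrightarrow> g \<in> carrier G \<Longrightarrow> y \<in> topspace Y \<Longrightarrow> T g y \<in> topspace Y"
  unfolding continuous_action_def by (meson continuous_map_image_subset_topspace image_subset_iff)

lemma continuous_action_inv_cancel: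
  assumes "group G" "continuous_action G Y T" "g \<in> carrier G" "y \<in> topspace Y"
  shows "T (inv\<^bsub>G\<^esub> g) (T g y) = y"
  using assms unfolding continuous_action_def by (metis group.inv_closed group.l_inv)

lemma minimal_action_derived_set_of_topspace:
  assumes "group G" "compact_space Y" "Hausdorff_space Y" "infinite (topspace Y)"
    and "continuous_action G Y T" "minimal_action G Y T"
  shows "Y derived_set_of topspace Y = topspace Y"
proof -
  let ?D = "Y derived_set_of topspace Y"
  have "T g ` ?D \<subseteq> ?D" if "g \<in> carrier G" for g
  proof -
    have "homeomorphic_maps Y Y (T g) (T (inv\<^bsub>G\<^esub> g))"
      using assms(1,5) that continuous_action_inv_cancel[OF assms(1,5)]
        continuous_action_inv_cancel[OF assms(1,5), of "inv\<^bsub>G\<^esub> g"]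
      unfolding homeomorphic_maps_def continuous_action_def by (simp add: group.inv_inv)
    then have "homeomorphic_map Y Y (T g)"
      using homeomorphic_map_maps by blast
    then show ?thesis
      using homeomorphic_map_derived_set_of[of Y Y "T g" "topspace Y"]
        homeomorphic_imp_surjective_map by fastforce
  qed
  moreover have "closedin Y ?D"
    using closedin_derived_set_of[OF assms(3)] .
  ultimately have "?D = {} \<or> ?D = topspace Y"
    using assms(6) unfolding minimal_action_def by auto
  moreover have "?D \<noteq> {}"
    using discrete_compact_space_eq_finite assms(2,4) by blast
  ultimately show ?thesis
    by blast
qed

section \<open>Refining open covers\<close>

lemma compact_space_cell_subset_open:
  assumes "compact_space Y"
    and level_open: "\<And>c v. c \<in> Cs \<Longrightarrow> openin Y {y \<in> topspace Y. \<phi> c y = v}"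
    and separating: "\<And>y y'. y \<in> topspace Y \<Longrightarrow> y' \<in> topspace Y \<Longrightarrow> y \<noteq> y' \<Longrightarrow> \<exists>c\<in>Cs. \<phi> c y \<noteq> \<phi> c y'"
    and "openin Y U" "y \<in> U"
  obtains C where "C \<subseteq> Cs" "finite C" "{y' \<in> topspace Y. \<forall>c\<in>C. \<phi> c y' = \<phi> c y} \<subseteq> U"
proof -
  define Off where "Off c = {y' \<in> topspace Y. \<phi> c y' \<noteq> \<phi> c y}" for c
  have "openin Y (Off c)" if "c \<in> Cs" for c
  proof -
    have "Off c = \<Union>((\<lambda>v. {y' \<in> topspace Y. \<phi> c y' = v}) ` {v. v \<noteq> \<phi> c y})"
      unfolding Off_def by auto
    then show ?thesis
      using level_open[OF that] by auto
  qed
  moreover have "compactin Y (topspace Y - U)"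
    using \<open>openin Y U\<close> by (intro closedin_compact_space[OF \<open>compact_space Y\<close>]) auto
  moreover have "topspace Y - U \<subseteq> \<Union>(Off ` Cs)"
  proof
    fix z assume z: "z \<in> topspace Y - U"
    then obtain c where "c \<in> Cs" "\<phi> c z \<noteq> \<phi> c y"
      using separating[of z y] \<open>y \<in> U\<close> \<open>openin Y U\<close> openin_subset by blast
    then show "z \<in> \<Union>(Off ` Cs)"
      using z unfolding Off_def by blast
  qed
  ultimately obtain \<F> where "finite \<F>" "\<F> \<subseteq> Off ` Cs" "topspace Y - U \<subseteq> \<Union>\<F>"
    unfolding compactin_def by (metis (no_types, lifting) imageE)
  then obtain C where "C \<subseteq> Cs" "finite C" "topspace Y - U \<subseteq> \<Union>(Off ` C)"
    by (metis finite_subset_image)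
  then show thesis
    by (intro that) (auto simp: Off_def)
qed

lemma openin_cell:
  assumes "\<And>c v. c \<in> Cs \<Longrightarrow> openin Y {y \<in> topspace Y. \<phi> c y = v}" "finite C" "C \<subseteq> Cs"
  shows "openin Y {y' \<in> topspace Y. \<forall>c\<in>C. \<phi> c y' = \<phi> c y}"
proof -
  have "{y' \<in> topspace Y. \<forall>c\<in>C. \<phi> c y' = \<phi> c y} =
      topspace Y \<inter> (\<Inter>c\<in>C. {y' \<in> topspace Y. \<phi> c y' = \<phi> c y})"
    by auto
  then show ?thesis
    using assms by (auto intro!: openin_Int_Inter)
qed

lemma compact_space_cells_refine_cover:
  assumes "compact_space Y"
    and level_open: "\<And>c v. c \<in> Cs \<Longrightarrow> openin Y {y \<in> topspace Y. \<phi> c y = v}"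
    and separating: "\<And>y y'. y \<in> topspace Y \<Longrightarrow> y' \<in> topspace Y \<Longrightarrow> y \<noteq> y' \<Longrightarrow> \<exists>c\<in>Cs. \<phi> c y \<noteq> \<phi> c y'"
    and "\<And>U. U \<in> \<U> \<Longrightarrow> openin Y U" "topspace Y \<subseteq> \<Union>\<U>"
  obtains C where "C \<subseteq> Cs" "finite C"
    "\<forall>y\<in>topspace Y. \<exists>U\<in>\<U>. {y' \<in> topspace Y. \<forall>c\<in>C. \<phi> c y' = \<phi> c y} \<subseteq> U"
proof -
  define cell where "cell C y = {y' \<in> topspace Y. \<forall>c\<in>C. \<phi> c y' = \<phi> c y}" for C y
  have "\<exists>C U. C \<subseteq> Cs \<and> finite C \<and> U \<in> \<U> \<and> cell C y \<subseteq> U" if y: "y \<in> topspace Y" for y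
  proof -
    obtain U where "U \<in> \<U>" "y \<in> U"
      using assms(5) y by blast
    moreover obtain C where "C \<subseteq> Cs" "finite C" "cell C y \<subseteq> U"
      using compact_space_cell_subset_open[OF assms(1-3) assms(4)[OF \<open>U \<in> \<U>\<close>] \<open>y \<in> U\<close>]
      unfolding cell_def by blast
    ultimately show ?thesis
      by blast
  qed
  then obtain Cy Uy where Cy: "\<And>y. y \<in> topspace Y \<Longrightarrow> Cy y \<subseteq> Cs \<and> finite (Cy y) \<and> Uy y \<in> \<U> \<and> cell (Cy y) y \<subseteq> Uy y"
    by metis
  have "openin Y (cell (Cy y) y)" if "y \<in> topspace Y" for y
    unfolding cell_def using Cy[OF that] by (intro openin_cell[OF level_open]) auto
  moreover have "topspace Y \<subseteq> \<Union>((\<lambda>y. cell (Cy y) y) ` topspace Y)"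
    unfolding cell_def by auto
  ultimately obtain F where F: "finite F" "F \<subseteq> topspace Y" "topspace Y \<subseteq> (\<Union>y\<in>F. cell (Cy y) y)"
    using \<open>compact_space Y\<close> unfolding compact_space_alt
    by (smt (verit, ccfv_threshold) finite_subset_image image_iff)
  show thesis
  proof
    show "\<Union>(Cy ` F) \<subseteq> Cs" "finite (\<Union>(Cy ` F))"
      using Cy F by auto
    show "\<forall>y\<in>topspace Y. \<exists>U\<in>\<U>. {y' \<in> topspace Y. \<forall>c\<in>\<Union>(Cy ` F). \<phi> c y' = \<phi> c y} \<subseteq> U"
    proof
      fix y assume "y \<in> topspace Y"
      then obtain y0 where "y0 \<in> F" "y \<in> cell (Cy y0) y0"
        using F(3) by blast
      then have "cell (\<Union>(Cy ` F)) y \<subseteq> Uy y0"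
        using Cy[of y0] F(2) unfolding cell_def by fastforce
      then show "\<exists>U\<in>\<U>. {y' \<in> topspace Y. \<forall>c\<in>\<Union>(Cy ` F). \<phi> c y' = \<phi> c y} \<subseteq> U"
        using Cy[of y0] \<open>y0 \<in> F\<close> F(2) unfolding cell_def by blast
    qed
  qed
qed

lemma min_subcover_le_card_image:
  assumes "finite (\<kappa> ` topspace Y)"
    and "\<And>y. y \<in> topspace Y \<Longrightarrow> \<exists>V\<in>\<V>. {y' \<in> topspace Y. \<kappa> y' = \<kappa> y} \<subseteq> V"
  shows "min_subcover Y \<V> \<le> card (\<kappa> ` topspace Y)"
proof -
  have "\<forall>k\<in>\<kappa> ` topspace Y. \<exists>V. V \<in> \<V> \<and> {y \<in> topspace Y. \<kappa> y = k} \<subseteq> V"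
    using assms(2) by blast
  then obtain V where V: "\<And>k. k \<in> \<kappa> ` topspace Y \<Longrightarrow> V k \<in> \<V> \<and> {y \<in> topspace Y. \<kappa> y = k} \<subseteq> V k"
    by metis
  have "V ` \<kappa> ` topspace Y \<subseteq> \<V>" "topspace Y \<subseteq> \<Union>(V ` \<kappa> ` topspace Y)"
    using V by blast+
  then have "min_subcover Y \<V> \<le> card (V ` \<kappa> ` topspace Y)"
    unfolding min_subcover_def using assms(1) by (intro Least_le) blast
  also have "\<dots> \<le> card (\<kappa> ` topspace Y)"
    using assms(1) by (rule card_image_le)
  finally show ?thesis .
qed

lemma min_subcover_cover_join_le:
  assumes "group G" "continuous_action G Y T" "\<And>i. s i \<in> carrier G"
    and "finite (\<kappa> ` topspace Y)"
    and cell_inside: "\<And>y0 i. y0 \<in> topspace Y \<Longrightarrow> i \<in> {1..n} \<Longrightarrow>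
           \<exists>U\<in>\<U>. \<forall>y\<in>topspace Y. \<kappa> y = \<kappa> y0 \<longrightarrow> T (s i) y \<in> U"
  shows "min_subcover Y (cover_join G T s \<U> n) \<le> card (\<kappa> ` topspace Y)"
proof (rule min_subcover_le_card_image[OF assms(4)])
  fix y0 assume "y0 \<in> topspace Y"
  then obtain U where U: "\<And>i. i \<in> {1..n} \<Longrightarrow> U i \<in> \<U> \<and> (\<forall>y\<in>topspace Y. \<kappa> y = \<kappa> y0 \<longrightarrow> T (s i) y \<in> U i)"
    using cell_inside by metis
  define V where "V i = T (inv\<^bsub>G\<^esub> (s i)) ` U i" for i
  have "(\<Inter>i\<in>{1..n}. V i) \<in> cover_join G T s \<U> n"
    unfolding cover_join_def V_def using U by blast
  moreover have "{y \<in> topspace Y. \<kappa> y = \<kappa> y0} \<subseteq> (\<Inter>i\<in>{1..n}. V i)"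
    unfolding V_def using U continuous_action_inv_cancel[OF assms(1,2,3)] by (blast intro: image_eqI[OF sym])
  ultimately show "\<exists>V\<in>cover_join G T s \<U> n. {y \<in> topspace Y. \<kappa> y = \<kappa> y0} \<subseteq> V"
    by blast
qed


section \<open>A descending chain of normal subgroups and its inverse limit\<close>

lemma topspace_invlim_top: "topspace (invlim_top G Gam) = invlim G Gam"
  unfolding invlim_top_def invlim_def by (auto simp: PiE_iff)

locale normal_chain = group G for G :: "('a, 'c) monoid_scheme" (structure) +
  fixes Gam :: "nat \<Rightarrow> 'a set"
  assumes Gam_normal: "\<And>n. Gam n \<lhd> G"
    and Gam_Suc_subset: "\<And>n. Gam (Suc n) \<subseteq> Gam n"
    and Inter_Gam: "(\<Inter>n. Gam n) = {\<one>}"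
begin

definition invlim_pt :: "'a \<Rightarrow> nat \<Rightarrow> 'a set" where
  "invlim_pt a = (\<lambda>n. Gam n #> a)"

lemma Gam_subgroup: "subgroup (Gam n) G"
  using Gam_normal normal_imp_subgroup by blast

lemma Gam_subset_carrier: "Gam n \<subseteq> carrier G"
  using Gam_subgroup subgroup.subset by blast

lemma Gam_antimono: "m \<le> n \<Longrightarrow> Gam n \<subseteq> Gam m"
  by (induction n rule: dec_induct) (use Gam_Suc_subset in auto)

lemma rcos_eq_iff:
  assumes "a \<in> carrier G" "b \<in> carrier G"
  shows "Gam n #> a = Gam n #> b \<longleftrightarrow> a \<otimes> inv b \<in> Gam n"
proof
  assume "Gam n #> a = Gam n #> b"
  then have "a \<in> Gam n #> b"
    using rcos_self[OF assms(1) Gam_subgroup[of n]] by simp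
  then show "a \<otimes> inv b \<in> Gam n"
    using subgroup.rcos_module_imp[OF Gam_subgroup is_group assms(2)] by blast
next
  assume "a \<otimes> inv b \<in> Gam n"
  then have "a \<in> Gam n #> b"
    using subgroup.rcos_module_rev[OF Gam_subgroup is_group assms(2,1)] by blast
  then show "Gam n #> a = Gam n #> b"
    using repr_independence[OF _ assms(2) Gam_subgroup] by simp
qed

lemma rcos_eq_self_iff: "a \<in> carrier G \<Longrightarrow> Gam n #> a = Gam n \<longleftrightarrow> a \<in> Gam n"
  using coset_join1[OF _ _ Gam_subgroup] coset_join2[OF _ Gam_subgroup] by blast

lemma lcos_rcos: "g \<in> carrier G \<Longrightarrow> a \<in> carrier G \<Longrightarrow> g <# (Gam n #> a) = Gam n #> (g \<otimes> a)"
  using coset_assoc[OF _ _ Gam_subset_carrier] normal.coset_eq[OF Gam_normal]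
    coset_mult_assoc[OF Gam_subset_carrier] by simp

lemma rcos_mult_left_cancel:
  assumes "b \<in> carrier G" "a \<in> carrier G" "c \<in> carrier G"
  shows "Gam n #> (b \<otimes> a) = Gam n #> (b \<otimes> c) \<longleftrightarrow> Gam n #> a = Gam n #> c"
proof
  assume "Gam n #> (b \<otimes> a) = Gam n #> (b \<otimes> c)"
  then have "inv b <# (Gam n #> (b \<otimes> a)) = inv b <# (Gam n #> (b \<otimes> c))"
    by simp
  then show "Gam n #> a = Gam n #> c"
    using assms by (simp add: lcos_rcos m_assoc[symmetric])
next
  assume "Gam n #> a = Gam n #> c"
  then have "b <# (Gam n #> a) = b <# (Gam n #> c)"
    by simp
  then show "Gam n #> (b \<otimes> a) = Gam n #> (b \<otimes> c)"
    using assms by (simp add: lcos_rcos)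
qed

lemma rcos_mult_eq_self_iff:
  assumes "b \<in> carrier G" "c \<in> carrier G"
  shows "Gam n #> (b \<otimes> c) = Gam n #> b \<longleftrightarrow> c \<in> Gam n"
  using rcos_mult_left_cancel[OF assms one_closed] rcos_eq_self_iff[OF assms(2)] assms
    coset_mult_one[OF Gam_subset_carrier] by simp

lemma rcos_mult_right_cancel:
  assumes "a \<in> carrier G" "b \<in> carrier G" "c \<in> carrier G"
  shows "Gam n #> (a \<otimes> c) = Gam n #> (b \<otimes> c) \<longleftrightarrow> Gam n #> a = Gam n #> b"
proof
  have cancel: "(Gam n #> (u \<otimes> c)) #> inv c = Gam n #> u" if "u \<in> carrier G" for u
    using that assms(3) by (simp add: coset_mult_assoc Gam_subset_carrier m_assoc)
  assume "Gam n #> (a \<otimes> c) = Gam n #> (b \<otimes> c)"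
  then show "Gam n #> a = Gam n #> b"
    using cancel[OF assms(1)] cancel[OF assms(2)] by simp
next
  assume "Gam n #> a = Gam n #> b"
  then show "Gam n #> (a \<otimes> c) = Gam n #> (b \<otimes> c)"
    using assms by (simp add: coset_mult_assoc[symmetric] Gam_subset_carrier)
qed

lemma invlimD: "x \<in> invlim G Gam \<Longrightarrow> \<exists>a\<in>carrier G. x n = Gam n #> a"
  unfolding invlim_def RCOSETS_def by blast

lemma invlim_antimono:
  assumes "x \<in> invlim G Gam" "m \<le> n"
  shows "x n \<subseteq> x m"
  using assms(2) by (induction n rule: dec_induct) (use assms(1) in \<open>auto simp: invlim_def\<close>)

lemma invlim_level_down:
  assumes x: "x \<in> invlim G Gam" and "m \<le> n" "a \<in> carrier G" "x n = Gam n #> a"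
  shows "x m = Gam m #> a"
proof -
  obtain b where b: "b \<in> carrier G" "x m = Gam m #> b"
    using invlimD[OF x] by blast
  have "a \<in> Gam m #> b"
    using assms rcos_self[OF _ Gam_subgroup] invlim_antimono[OF x] b(2) by blast
  then show ?thesis
    using repr_independence[OF _ b(1) Gam_subgroup] b(2) by simp
qed

lemma invlim_pt_in: "a \<in> carrier G \<Longrightarrow> invlim_pt a \<in> invlim G Gam"
  unfolding invlim_def invlim_pt_def
  using rcosetsI[OF Gam_subset_carrier] Gam_Suc_subset unfolding r_coset_def by blast

lemma invlim_pt_one: "invlim_pt \<one> = Gam"
  unfolding invlim_pt_def using Gam_subset_carrier by auto

lemma invlim_pt_inj:
  assumes "a \<in> carrier G" "b \<in> carrier G" "invlim_pt a = invlim_pt b"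
  shows "a = b"
proof -
  have "a \<otimes> inv b \<in> Gam n" for n
    using fun_cong[OF assms(3), of n] assms(1,2) rcos_eq_iff unfolding invlim_pt_def by simp
  then have "a \<otimes> inv b = \<one>"
    using Inter_Gam by blast
  then show ?thesis
    using assms(1,2) by (metis inv_closed inv_equality inv_inv)
qed

lemma invlim_act_level:
  "g \<in> carrier G \<Longrightarrow> a \<in> carrier G \<Longrightarrow> x n = Gam n #> a \<Longrightarrow> invlim_act G g x n = Gam n #> (g \<otimes> a)"
  unfolding invlim_act_def by (simp add: lcos_rcos)

lemma invlim_act_pt: "g \<in> carrier G \<Longrightarrow> a \<in> carrier G \<Longrightarrow> invlim_act G g (invlim_pt a) = invlim_pt (g \<otimes> a)"
  unfolding invlim_pt_def using invlim_act_level by auto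

lemma invlim_act_in:
  assumes "g \<in> carrier G" "x \<in> invlim G Gam"
  shows "invlim_act G g x \<in> invlim G Gam"
  unfolding invlim_def
proof (intro CollectI conjI allI)
  fix n
  obtain a where "a \<in> carrier G" "x n = Gam n #> a"
    using invlimD[OF assms(2)] by blast
  then show "invlim_act G g x n \<in> rcosets (Gam n)"
    using assms(1) invlim_act_level rcosetsI[OF Gam_subset_carrier] by simp
  show "invlim_act G g x (Suc n) \<subseteq> invlim_act G g x n"
    using assms(2) unfolding invlim_def invlim_act_def l_coset_def by blast
qed

lemma invlim_act_inv_cancel:
  assumes "g \<in> carrier G" "x \<in> invlim G Gam"
  shows "invlim_act G (inv g) (invlim_act G g x) = x"
proof
  fix n
  obtain a where a: "a \<in> carrier G" "x n = Gam n #> a"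
    using invlimD[OF assms(2)] by blast
  then show "invlim_act G (inv g) (invlim_act G g x) n = x n"
    using assms(1) invlim_act_level[of "inv g" "g \<otimes> a"] invlim_act_level[of g a]
    by (simp add: m_assoc[symmetric])
qed

lemma invlim_act_eq_Gam_iff:
  assumes "g \<in> carrier G" "x \<in> invlim G Gam"
  shows "invlim_act G g x = Gam \<longleftrightarrow> x = invlim_pt (inv g)"
proof
  assume "invlim_act G g x = Gam"
  then have "x = invlim_act G (inv g) (invlim_pt \<one>)"
    using invlim_act_inv_cancel[OF assms] invlim_pt_one by simp
  then show "x = invlim_pt (inv g)"
    using assms(1) invlim_act_pt[of "inv g" \<one>] by simp
next
  assume "x = invlim_pt (inv g)"
  then show "invlim_act G g x = Gam"
    using assms(1) invlim_act_pt[of g "inv g"] invlim_pt_one by simp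
qed

lemma infinite_invlim:
  assumes "infinite (carrier G)"
  shows "infinite (invlim G Gam)"
proof
  assume "finite (invlim G Gam)"
  then have "finite (invlim_pt ` carrier G)"
    using invlim_pt_in finite_subset[of "invlim_pt ` carrier G"] by blast
  moreover have "inj_on invlim_pt (carrier G)"
    using invlim_pt_inj by (blast intro: inj_onI)
  ultimately show False
    using assms finite_imageD by blast
qed

end


section \<open>The sets X_+ and their translates\<close>

locale marked_chain = normal_chain +
  fixes \<gamma> :: "nat \<Rightarrow> 'a"
  assumes \<gamma>_mem: "\<And>n. 1 \<le> n \<Longrightarrow> \<gamma> n \<in> Gam (n - 1) - Gam n"
    and index_gt_2: "\<And>n. 2 < card {Gam (Suc n) #> g | g. g \<in> Gam n}"
begin

text \<open>For x in the inverse limit, \<open>in_translated_Xplus b x\<close> says that x lies in b X_+.\<close>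
definition in_translated_Xplus :: "'a \<Rightarrow> (nat \<Rightarrow> 'a set) \<Rightarrow> bool" where
  "in_translated_Xplus b x \<longleftrightarrow> (\<exists>n\<ge>1. x n = Gam n #> (b \<otimes> \<gamma> n))"

lemma \<gamma>_carrier: "1 \<le> n \<Longrightarrow> \<gamma> n \<in> carrier G"
  using \<gamma>_mem Gam_subset_carrier by blast

lemma Xplus_iff: "x \<in> invlim G Gam \<Longrightarrow> x \<in> Xplus G Gam \<gamma> \<longleftrightarrow> in_translated_Xplus \<one> x"
  unfolding Xplus_def Cset_def in_translated_Xplus_def using \<gamma>_carrier by force

lemma invlim_act_Xplus_iff:
  assumes g: "g \<in> carrier G" and x: "x \<in> invlim G Gam"
  shows "invlim_act G g x \<in> Xplus G Gam \<gamma> \<longleftrightarrow> in_translated_Xplus (inv g) x"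
proof -
  have "invlim_act G g x n = Gam n #> \<gamma> n \<longleftrightarrow> x n = Gam n #> (inv g \<otimes> \<gamma> n)" if "1 \<le> n" for n
  proof -
    obtain a where a: "a \<in> carrier G" "x n = Gam n #> a"
      using invlimD[OF x] by blast
    have "\<gamma> n = g \<otimes> (inv g \<otimes> \<gamma> n)"
      using g \<gamma>_carrier[OF that] by (simp add: m_assoc[symmetric])
    then show ?thesis
      using a g \<gamma>_carrier[OF that] invlim_act_level[of g a x n]
        rcos_mult_left_cancel[of g a "inv g \<otimes> \<gamma> n" n] by simp
  qed
  then show ?thesis
    using Xplus_iff[OF invlim_act_in[OF g x]] \<gamma>_carrier unfolding in_translated_Xplus_def by auto
qed

lemma in_translated_Xplus_level:
  assumes x: "x \<in> invlim G Gam" and b: "b \<in> carrier G"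
    and n: "1 \<le> n" "x n = Gam n #> (b \<otimes> \<gamma> n)"
  shows "x (n - 1) = Gam (n - 1) #> b" "x n \<noteq> Gam n #> b"
proof -
  have "x (n - 1) = Gam (n - 1) #> (b \<otimes> \<gamma> n)"
    using invlim_level_down[OF x _ _ n(2)] b \<gamma>_carrier[OF n(1)] by simp
  then show "x (n - 1) = Gam (n - 1) #> b"
    using rcos_mult_eq_self_iff[OF b \<gamma>_carrier] \<gamma>_mem n(1) by simp
  show "x n \<noteq> Gam n #> b"
    using rcos_mult_eq_self_iff[OF b \<gamma>_carrier] \<gamma>_mem n by simp
qed

lemma in_translated_Xplus_iff_departure:
  assumes x: "x \<in> invlim G Gam" and b: "b \<in> carrier G"
    and follows: "\<And>k. k < d \<Longrightarrow> x k = Gam k #> b" and leaves: "x d \<noteq> Gam d #> b"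
  shows "in_translated_Xplus b x \<longleftrightarrow> 1 \<le> d \<and> x d = Gam d #> (b \<otimes> \<gamma> d)"
proof
  assume "in_translated_Xplus b x"
  then obtain n where n: "1 \<le> n" "x n = Gam n #> (b \<otimes> \<gamma> n)"
    unfolding in_translated_Xplus_def by blast
  note level = in_translated_Xplus_level[OF x b n]
  have "\<not> n < d"
    using follows level(2) by blast
  moreover have "\<not> d < n"
  proof
    assume "d < n"
    then have "x d = Gam d #> b"
      using invlim_level_down[OF x _ b level(1), of d] by simp
    then show False
      using leaves by simp
  qed
  ultimately show "1 \<le> d \<and> x d = Gam d #> (b \<otimes> \<gamma> d)"
    using n by simp
qed (auto simp: in_translated_Xplus_def)

lemma in_translated_Xplus_cong:
  assumes "x \<in> invlim G Gam" "x' \<in> invlim G Gam" "b \<in> carrier G"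
    and "\<And>k. k < d \<Longrightarrow> x k = Gam k #> b" "x d \<noteq> Gam d #> b"
    and "\<And>k. k \<le> d \<Longrightarrow> x' k = x k"
  shows "in_translated_Xplus b x' \<longleftrightarrow> in_translated_Xplus b x"
  using in_translated_Xplus_iff_departure[OF assms(1,3-5)]
    in_translated_Xplus_iff_departure[OF assms(2,3), of d] assms(4-6) by simp

lemma Xplus_invlim_pt_iff:
  assumes "a \<in> Gam N - Gam (Suc N)"
  shows "invlim_pt a \<in> Xplus G Gam \<gamma> \<longleftrightarrow> Gam (Suc N) #> a = Gam (Suc N) #> \<gamma> (Suc N)"
proof -
  have a: "a \<in> carrier G"
    using assms Gam_subset_carrier by blast
  have "invlim_pt a k = Gam k #> \<one>" if "k < Suc N" for k
    using that assms Gam_antimono[of k N] rcos_eq_self_iff[OF a] Gam_subset_carrier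
    unfolding invlim_pt_def by auto
  moreover have "invlim_pt a (Suc N) \<noteq> Gam (Suc N) #> \<one>"
    using assms rcos_eq_self_iff[OF a] Gam_subset_carrier unfolding invlim_pt_def by auto
  ultimately have "in_translated_Xplus \<one> (invlim_pt a) \<longleftrightarrow>
      invlim_pt a (Suc N) = Gam (Suc N) #> (\<one> \<otimes> \<gamma> (Suc N))"
    using in_translated_Xplus_iff_departure[OF invlim_pt_in[OF a] one_closed, of "Suc N"] by simp
  then show ?thesis
    using Xplus_iff[OF invlim_pt_in[OF a]] \<gamma>_carrier[of "Suc N"] unfolding invlim_pt_def by simp
qed

lemma exists_fsign_near_one:
  assumes "s \<in> {1, -1}"
  shows "\<exists>a\<in>Gam N - Gam (Suc N). fsign G Gam \<gamma> (invlim_pt a) = s"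
proof -
  let ?H = "Gam (Suc N)"
  have \<gamma>N: "\<gamma> (Suc N) \<in> Gam N - ?H" "\<gamma> (Suc N) \<in> carrier G"
    using \<gamma>_mem[of "Suc N"] \<gamma>_carrier[of "Suc N"] by auto
  have "\<exists>a\<in>Gam N. ?H #> a \<notin> {?H, ?H #> \<gamma> (Suc N)}"
  proof (rule ccontr)
    assume "\<not> ?thesis"
    then have "{?H #> g | g. g \<in> Gam N} \<subseteq> {?H, ?H #> \<gamma> (Suc N)}"
      by auto
    then have "card {?H #> g | g. g \<in> Gam N} \<le> card {?H, ?H #> \<gamma> (Suc N)}"
      by (intro card_mono) auto
    also have "\<dots> \<le> 2"
      by (simp add: card_insert_if)
    finally show False
      using index_gt_2[of N] by simp
  qed
  then obtain a where a: "a \<in> Gam N" "?H #> a \<noteq> ?H" "?H #> a \<noteq> ?H #> \<gamma> (Suc N)"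
    by blast
  then have "a \<in> Gam N - ?H"
    using rcos_eq_self_iff Gam_subset_carrier by blast
  then show ?thesis
    using assms a(3) \<gamma>N Xplus_invlim_pt_iff unfolding fsign_def by (cases "s = 1") auto
qed

end


section \<open>Counting sign patterns\<close>

context marked_chain
begin

text \<open>For finitely many branches \<open>invlim_pt b\<close>, \<open>b \<in> S\<close>, and a point x off all of them, x leaves
  the last of them at \<open>exit_level S x\<close>; \<open>followed S x\<close> are the branches it follows up to that
  level, and \<open>turned S x\<close> those from which it turns off there in the direction of \<open>\<gamma>\<close>.\<close>
definition exit_level :: "'a set \<Rightarrow> (nat \<Rightarrow> 'a set) \<Rightarrow> nat" where
  "exit_level S x = (LEAST n. \<forall>b\<in>S. x n \<noteq> Gam n #> b)"

definition followed :: "'a set \<Rightarrow> (nat \<Rightarrow> 'a set) \<Rightarrow> 'a set" where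
  "followed S x = {b \<in> S. \<forall>k<exit_level S x. x k = Gam k #> b}"

definition turned :: "'a set \<Rightarrow> (nat \<Rightarrow> 'a set) \<Rightarrow> 'a set" where
  "turned S x = {b \<in> followed S x. 1 \<le> exit_level S x \<and>
     x (exit_level S x) = Gam (exit_level S x) #> (b \<otimes> \<gamma> (exit_level S x))}"

definition branch_node :: "'a set \<Rightarrow> 'a \<Rightarrow> nat \<Rightarrow> 'a set" where
  "branch_node S b k = {c \<in> S. \<forall>j<k. Gam j #> c = Gam j #> b}"

definition branch_nodes :: "'a set \<Rightarrow> 'a set set" where
  "branch_nodes S = insert {} (\<Union>b\<in>S. range (branch_node S b))"

lemma card_branch_nodes:
  assumes "finite S"
  shows "finite (branch_nodes S)" "card (branch_nodes S) \<le> (card S + 1)\<^sup>2"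
proof -
  have range_le: "card (range (branch_node S b)) \<le> card S + 1" for b
    by (rule card_range_chain_le[OF assms]) (auto simp: branch_node_def)
  have "range (branch_node S b) \<subseteq> Pow S" for b
    by (auto simp: branch_node_def)
  then have "finite (range (branch_node S b))" for b
    using assms by (meson finite_Pow_iff finite_subset)
  then show "finite (branch_nodes S)"
    using assms by (simp add: branch_nodes_def)
  then have "card (branch_nodes S) \<le> Suc (card (\<Union>b\<in>S. range (branch_node S b)))"
    using assms unfolding branch_nodes_def by (simp add: card_insert_if)
  also have "\<dots> \<le> Suc (\<Sum>b\<in>S. card (range (branch_node S b)))"
    using card_UN_le[OF assms] by simp
  also have "\<dots> \<le> Suc (card S * (card S + 1))"
    using sum_bounded_above[of S _ "card S + 1"] range_le by simp
  also have "\<dots> \<le> (card S + 1)\<^sup>2"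
    by (simp add: power2_eq_square)
  finally show "card (branch_nodes S) \<le> (card S + 1)\<^sup>2" .
qed

lemma exit_level_leaves:
  assumes "finite S" "S \<subseteq> carrier G" and x: "x \<in> invlim G Gam"
    and off: "\<forall>b\<in>S. x \<noteq> invlim_pt b" and "b \<in> S"
  shows "x (exit_level S x) \<noteq> Gam (exit_level S x) #> b"
proof -
  have "\<forall>b\<in>S. \<exists>n. x n \<noteq> Gam n #> b"
    using off unfolding invlim_pt_def fun_eq_iff by blast
  then obtain N where N: "\<And>b. b \<in> S \<Longrightarrow> x (N b) \<noteq> Gam (N b) #> b"
    by metis
  have "\<forall>b\<in>S. x (Max (N ` S)) \<noteq> Gam (Max (N ` S)) #> b"
  proof (intro ballI notI)
    fix b assume b: "b \<in> S" and eq: "x (Max (N ` S)) = Gam (Max (N ` S)) #> b"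
    have "N b \<le> Max (N ` S)"
      using assms(1) b by simp
    from invlim_level_down[OF x this _ eq] have "x (N b) = Gam (N b) #> b"
      using b assms(2) by blast
    with N b show False
      by blast
  qed
  from LeastI[of "\<lambda>n. \<forall>b\<in>S. x n \<noteq> Gam n #> b", OF this] show ?thesis
    unfolding exit_level_def using \<open>b \<in> S\<close> by blast
qed

lemma followed_nonempty:
  assumes "S \<subseteq> carrier G" "x \<in> invlim G Gam" "1 \<le> exit_level S x"
  shows "followed S x \<noteq> {}"
proof -
  obtain b where "b \<in> S" "x (exit_level S x - 1) = Gam (exit_level S x - 1) #> b"
    using not_less_Least[of "exit_level S x - 1" "\<lambda>n. \<forall>b\<in>S. x n \<noteq> Gam n #> b"] assms(3)
    unfolding exit_level_def by auto
  moreover have "x k = Gam k #> b" if "b \<in> S" "k < exit_level S x"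
    "x (exit_level S x - 1) = Gam (exit_level S x - 1) #> b" for k b
    using invlim_level_down[OF assms(2) _ _ that(3), of k] that(1,2) assms(1) by auto
  ultimately show ?thesis
    unfolding followed_def by blast
qed

lemma followed_in_branch_nodes: "followed S x \<in> branch_nodes S"
proof (cases "followed S x = {}")
  case False
  then obtain b where b: "b \<in> followed S x"
    by blast
  then have "followed S x = branch_node S b (exit_level S x)"
    unfolding followed_def branch_node_def by auto
  then show ?thesis
    using b unfolding branch_nodes_def followed_def by blast
qed (simp add: branch_nodes_def)

lemma turned_in_branch_nodes:
  assumes "S \<subseteq> carrier G"
  shows "turned S x \<in> branch_nodes S"
proof (cases "turned S x = {}")
  case False
  let ?D = "exit_level S x"
  obtain b where b: "b \<in> turned S x"
    using False by blast
  have "c \<in> turned S x \<longleftrightarrow> c \<in> branch_node S b (Suc ?D)" for c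
  proof -
    have bD: "b \<in> S" "1 \<le> ?D" "x ?D = Gam ?D #> (b \<otimes> \<gamma> ?D)"
      using b unfolding turned_def followed_def by auto
    have "x ?D = Gam ?D #> (c \<otimes> \<gamma> ?D) \<longleftrightarrow> Gam ?D #> b = Gam ?D #> c" if "c \<in> S"
      unfolding bD(3) using bD(1) that assms \<gamma>_carrier[OF bD(2)] by (intro rcos_mult_right_cancel) auto
    then have "x ?D = Gam ?D #> (c \<otimes> \<gamma> ?D) \<longleftrightarrow> Gam ?D #> c = Gam ?D #> b" if "c \<in> S"
      using that by (simp add: eq_commute)
    then show ?thesis
      using b unfolding turned_def followed_def branch_node_def by (auto simp: less_Suc_eq)
  qed
  then have "turned S x = branch_node S b (Suc ?D)"
    by blast
  then show ?thesis
    using b unfolding branch_nodes_def turned_def followed_def by blast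
qed (simp add: branch_nodes_def)

lemma in_translated_Xplus_by_branches:
  assumes S: "finite S" "S \<subseteq> carrier G" and x: "x \<in> invlim G Gam"
    and off: "\<forall>b\<in>S. x \<noteq> invlim_pt b" and b: "b \<in> S"
  shows "in_translated_Xplus b x \<longleftrightarrow>
    (if b \<in> followed S x then b \<in> turned S x
     else in_translated_Xplus b (invlim_pt (SOME a. a \<in> followed S x)))"
proof (cases "b \<in> followed S x")
  case True
  then have "\<And>k. k < exit_level S x \<Longrightarrow> x k = Gam k #> b"
    unfolding followed_def by blast
  from in_translated_Xplus_iff_departure[OF x _ this exit_level_leaves[OF S x off b]]
  show ?thesis
    using True b S(2) unfolding turned_def by auto
next
  case False
  let ?D = "exit_level S x"
  define d where "d = (LEAST k. x k \<noteq> Gam k #> b)"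
  obtain k where k: "k < ?D" "x k \<noteq> Gam k #> b"
    using False b unfolding followed_def by auto
  have d: "d \<le> k" "x d \<noteq> Gam d #> b"
    unfolding d_def using k(2) by (rule Least_le, rule LeastI)
  have below_d: "x j = Gam j #> b" if "j < d" for j
    using not_less_Least[OF that[unfolded d_def]] by blast
  define a where "a = (SOME a. a \<in> followed S x)"
  have "a \<in> followed S x"
    using followed_nonempty[OF S(2) x] k(1) unfolding a_def by (simp add: some_in_eq)
  then have "a \<in> carrier G" "\<And>j. j \<le> d \<Longrightarrow> invlim_pt a j = x j"
    using S(2) d(1) k(1) unfolding followed_def invlim_pt_def by auto
  then show ?thesis
    using False in_translated_Xplus_cong[OF x invlim_pt_in _ below_d d(2)] b S(2)
    unfolding a_def by auto
qed

lemma card_translated_Xplus_patterns: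
  assumes "finite S" "S \<subseteq> carrier G"
  shows "card ((\<lambda>x. restrict (\<lambda>b. in_translated_Xplus b x) S) `
      {x \<in> invlim G Gam. \<forall>b\<in>S. x \<noteq> invlim_pt b}) \<le> (card S + 1) ^ 4"
proof -
  define \<Phi> where "\<Phi> = (\<lambda>(A, B). restrict
      (\<lambda>b. if b \<in> A then b \<in> B else in_translated_Xplus b (invlim_pt (SOME a. a \<in> A))) S)"
  have "(\<lambda>x. restrict (\<lambda>b. in_translated_Xplus b x) S) ` {x \<in> invlim G Gam. \<forall>b\<in>S. x \<noteq> invlim_pt b}
      \<subseteq> \<Phi> ` (branch_nodes S \<times> branch_nodes S)"
  proof clarify
    fix x assume x: "x \<in> invlim G Gam" "\<forall>b\<in>S. x \<noteq> invlim_pt b"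
    have "restrict (\<lambda>b. in_translated_Xplus b x) S = \<Phi> (followed S x, turned S x)"
      unfolding \<Phi>_def prod.case using in_translated_Xplus_by_branches[OF assms x] by (intro restrict_ext) simp
    then show "restrict (\<lambda>b. in_translated_Xplus b x) S \<in> \<Phi> ` (branch_nodes S \<times> branch_nodes S)"
      using followed_in_branch_nodes turned_in_branch_nodes[OF assms(2)] by blast
  qed
  then have "card ((\<lambda>x. restrict (\<lambda>b. in_translated_Xplus b x) S) `
      {x \<in> invlim G Gam. \<forall>b\<in>S. x \<noteq> invlim_pt b}) \<le> card (\<Phi> ` (branch_nodes S \<times> branch_nodes S))"
    using card_branch_nodes(1)[OF assms(1)] by (intro card_mono) auto
  also have "\<dots> \<le> card (branch_nodes S \<times> branch_nodes S)"
    using card_branch_nodes(1)[OF assms(1)] by (intro card_image_le) simp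
  also have "\<dots> \<le> (card S + 1) ^ 4"
    using card_branch_nodes[OF assms(1)] power_mono[of _ "(card S + 1)\<^sup>2" 2]
    by (simp add: card_cartesian_product power2_eq_square[symmetric] power_mult[symmetric])
  finally show ?thesis .
qed

end

section \<open>The McMahon extension\<close>

locale McMahon_null = marked_chain G Gam \<gamma> for G :: "('a, 'c) monoid_scheme" (structure) and Gam \<gamma> +
  fixes Y :: "'b topology" and T :: "'a \<Rightarrow> 'b \<Rightarrow> 'b" and p :: "'b \<Rightarrow> nat \<Rightarrow> 'a set"
    and F :: "'b \<Rightarrow> real"
  assumes McMahon: "is_McMahon_extension G (invlim_top G Gam) (invlim_act G) Gam (fsign G Gam \<gamma>) Y T p"
    and F_cont: "continuous_map Y euclideanreal F"
    and F_eq: "\<And>y. y \<in> topspace Y \<Longrightarrow> p y \<noteq> Gam \<Longrightarrow> F y = fsign G Gam \<gamma> (p y)"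
    and infinite_carrier: "infinite (carrier G)"
    and finite_rcosets: "\<And>n. finite (rcosets (Gam n))"
begin

lemma compact_Y: "compact_space Y"
  using McMahon unfolding is_McMahon_extension_def by blast

lemma Hausdorff_Y: "Hausdorff_space Y"
  using McMahon metrizable_imp_Hausdorff_space unfolding is_McMahon_extension_def by blast

lemma action: "continuous_action G Y T"
  using McMahon unfolding is_McMahon_extension_def by blast

lemma minimal: "minimal_action G Y T"
  using McMahon unfolding is_McMahon_extension_def by blast

lemma p_cont: "continuous_map Y (invlim_top G Gam) p"
  using McMahon unfolding is_McMahon_extension_def by blast

lemma p_image: "p ` topspace Y = invlim G Gam"
  using McMahon topspace_invlim_top unfolding is_McMahon_extension_def by simp

lemma p_equivariant: "g \<in> carrier G \<Longrightarrow> y \<in> topspace Y \<Longrightarrow> p (T g y) = invlim_act G g (p y)"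
  using McMahon unfolding is_McMahon_extension_def by blast

lemma orbit_one: "{invlim_act G g Gam | g. g \<in> carrier G} = invlim_pt ` carrier G"
  using invlim_act_pt[of _ \<one>] invlim_pt_one by force

lemma card_fibre_off_orbit:
  "x \<in> invlim G Gam \<Longrightarrow> x \<notin> invlim_pt ` carrier G \<Longrightarrow> card {y \<in> topspace Y. p y = x} = 1"
  using McMahon unfolding is_McMahon_extension_def orbit_one topspace_invlim_top by blast

lemma card_fibre_orbit: "x \<in> invlim_pt ` carrier G \<Longrightarrow> card {y \<in> topspace Y. p y = x} = 2"
  using McMahon unfolding is_McMahon_extension_def orbit_one by blast

lemma p_in: "y \<in> topspace Y \<Longrightarrow> p y \<in> invlim G Gam"
  using p_image by blast

lemma T_in: "g \<in> carrier G \<Longrightarrow> y \<in> topspace Y \<Longrightarrow> T g y \<in> topspace Y"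
  by (rule continuous_action_in_topspace[OF action])

lemma T_mult: "g \<in> carrier G \<Longrightarrow> h \<in> carrier G \<Longrightarrow> y \<in> topspace Y \<Longrightarrow> T (g \<otimes> h) y = T g (T h y)"
  using action unfolding continuous_action_def by blast

lemma T_inv_cancel: "g \<in> carrier G \<Longrightarrow> y \<in> topspace Y \<Longrightarrow> T (inv g) (T g y) = y"
  by (rule continuous_action_inv_cancel[OF is_group action])

lemma infinite_Y: "infinite (topspace Y)"
  using p_image infinite_invlim[OF infinite_carrier] finite_imageI[of "topspace Y" p] by argo

lemma p_level_clopen: "openin Y {y \<in> topspace Y. p y N = v}" "closedin Y {y \<in> topspace Y. p y N = v}"
proof -
  have "continuous_map (invlim_top G Gam) (discrete_topology (rcosets (Gam N))) (\<lambda>x. x N)"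
    unfolding invlim_top_def
    by (rule continuous_map_from_subtopology) (rule continuous_map_product_projection, simp)
  then have cont: "continuous_map Y (discrete_topology (rcosets (Gam N))) (\<lambda>y. p y N)"
    using continuous_map_compose[OF p_cont] by (simp add: o_def)
  have eq: "{y \<in> topspace Y. p y N \<in> {v} \<inter> rcosets (Gam N)} = {y \<in> topspace Y. p y N = v}"
    using p_in unfolding invlim_def by auto
  show "openin Y {y \<in> topspace Y. p y N = v}"
    using openin_continuous_map_preimage[OF cont, of "{v} \<inter> rcosets (Gam N)"] eq by simp
  show "closedin Y {y \<in> topspace Y. p y N = v}"
    using closedin_continuous_map_preimage[OF cont, of "{v} \<inter> rcosets (Gam N)"] eq by simp
qed

lemma finite_fibre_one: "finite {y \<in> topspace Y. p y = Gam}"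
  using card_fibre_orbit[of Gam] invlim_pt_one by (intro card_ge_0_finite) force

text \<open>Over the base point F is not prescribed; a value other than 1 and -1 there would make a point
  over the base point isolated, which minimality excludes.\<close>
lemma F_values: "y \<in> topspace Y \<Longrightarrow> F y \<in> {1, -1}"
proof (rule ccontr)
  assume y: "y \<in> topspace Y" "F y \<notin> {1, -1}"
  let ?O = "{z \<in> topspace Y. F z \<in> - {1, -1}}"
  have O_open: "openin Y ?O"
    by (rule openin_continuous_map_preimage[OF F_cont]) (simp add: open_Compl finite_imp_closed)
  have "?O \<subseteq> {z \<in> topspace Y. p z = Gam}"
  proof
    fix z assume "z \<in> ?O"
    then have z: "z \<in> topspace Y" "F z \<in> - {1, -1}"
      by auto
    have "p z = Gam"
    proof (rule ccontr)
      assume "p z \<noteq> Gam"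
      then have "F z = fsign G Gam \<gamma> (p z)"
        using F_eq z(1) by auto
      then show False
        using z(2) unfolding fsign_def by (auto split: if_splits)
    qed
    then show "z \<in> {z \<in> topspace Y. p z = Gam}"
      using z(1) by simp
  qed
  then have "finite ?O"
    using finite_subset[OF _ finite_fibre_one] by blast
  have "t1_space Y"
    by (rule Hausdorff_imp_t1_space[OF Hausdorff_Y])
  then have "Y derived_set_of topspace Y =
      {x \<in> topspace Y. \<forall>U. x \<in> U \<and> openin Y U \<longrightarrow> infinite (topspace Y \<inter> U)}"
    unfolding t1_space_derived_set_of_infinite_openin by (rule spec)
  moreover have "y \<in> Y derived_set_of topspace Y"
    using minimal_action_derived_set_of_topspace[OF is_group compact_Y Hausdorff_Y infinite_Y action minimal] y(1)
    by simp
  ultimately have "infinite (topspace Y \<inter> ?O)"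
    using O_open y by auto
  then show False
    using \<open>finite ?O\<close> by (simp add: Int_absorb1)
qed

lemma F_level_clopen: "openin Y {y \<in> topspace Y. F y = v}" "closedin Y {y \<in> topspace Y. F y = v}"
proof -
  show "openin Y {y \<in> topspace Y. F y = v}"
  proof (cases "v \<in> {1, -1}")
    case True
    then have "F y \<in> ball v 1 \<longleftrightarrow> F y = v" if "y \<in> topspace Y" for y
      using F_values[OF that] by (auto simp: dist_real_def)
    then have "{y \<in> topspace Y. F y = v} = {y \<in> topspace Y. F y \<in> ball v 1}"
      by auto
    then show ?thesis
      using openin_continuous_map_preimage[OF F_cont, of "ball v 1"] by simp
  next
    case False
    then have "{y \<in> topspace Y. F y = v} = {}"
      using F_values by blast
    then show ?thesis
      by (metis openin_empty)
  qed
  show "closedin Y {y \<in> topspace Y. F y = v}"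
    using closedin_continuous_map_preimage[OF F_cont, of "{v}"] by simp
qed

lemma exists_F_near_one:
  assumes "s \<in> {1, -1}"
  shows "\<exists>y\<in>topspace Y. F y = s \<and> p y N = Gam N"
proof -
  obtain a where a: "a \<in> Gam N - Gam (Suc N)" "fsign G Gam \<gamma> (invlim_pt a) = s"
    using exists_fsign_near_one[OF assms] by blast
  then have a_carrier: "a \<in> carrier G"
    using Gam_subset_carrier by blast
  then have "invlim_pt a \<in> p ` topspace Y"
    unfolding p_image by (rule invlim_pt_in)
  then obtain y where py: "invlim_pt a = p y" and y: "y \<in> topspace Y"
    by (rule imageE)
  have "p y (Suc N) \<noteq> Gam (Suc N)"
    using py[symmetric] a(1) rcos_eq_self_iff[OF a_carrier, of "Suc N"] unfolding invlim_pt_def by simp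
  then have "p y \<noteq> Gam"
    by metis
  then have "F y = s"
    using F_eq[OF y] py a(2) by simp
  moreover have "p y N = Gam N"
    using py[symmetric] a(1) rcos_eq_self_iff[OF a_carrier, of N] unfolding invlim_pt_def by simp
  ultimately show ?thesis
    using y by blast
qed

text \<open>X_+ and X_- both accumulate at the base point, so by compactness both signs occur over it.\<close>
lemma F_attains_sign_over_one:
  assumes "s \<in> {1, -1}"
  shows "\<exists>y\<in>topspace Y. p y = Gam \<and> F y = s"
proof -
  define K where "K N = {y \<in> topspace Y. F y = s} \<inter> {y \<in> topspace Y. p y N = Gam N}" for N
  have "closedin Y (K N)" for N
    unfolding K_def using F_level_clopen(2) p_level_clopen(2) by (intro closedin_Int)
  moreover have "K N \<noteq> {}" for N
    using exists_F_near_one[OF assms, of N] unfolding K_def by auto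
  moreover have "decseq K"
  proof (rule decseq_SucI, rule subsetI)
    fix N y assume "y \<in> K (Suc N)"
    then have y: "y \<in> topspace Y" "F y = s" "p y (Suc N) = Gam (Suc N) #> \<one>"
      using Gam_subset_carrier unfolding K_def by auto
    have "p y N = Gam N #> \<one>"
      using invlim_level_down[OF p_in[OF y(1)] _ one_closed y(3)] by simp
    then show "y \<in> K N"
      using y Gam_subset_carrier unfolding K_def by simp
  qed
  ultimately have "\<Inter>(range K) \<noteq> {}"
    using compact_space_imp_nest[OF compact_Y] by blast
  then obtain y where "\<And>N. y \<in> K N"
    by blast
  then have "y \<in> topspace Y" "F y = s" "\<And>N. p y N = Gam N"
    unfolding K_def by auto
  then show ?thesis
    by auto
qed

lemma F_inj_on_fibre_one:
  assumes z: "z1 \<in> topspace Y" "z2 \<in> topspace Y" "p z1 = Gam" "p z2 = Gam" "z1 \<noteq> z2"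
  shows "F z1 \<noteq> F z2"
proof
  assume eq: "F z1 = F z2"
  have sub: "{z1, z2} \<subseteq> {y \<in> topspace Y. p y = Gam}"
    using z by auto
  moreover have "card {z1, z2} = card {y \<in> topspace Y. p y = Gam}"
    using card_fibre_orbit[of Gam] invlim_pt_one z(5) by force
  ultimately have fibre: "{y \<in> topspace Y. p y = Gam} = {z1, z2}"
    using card_subset_eq[OF finite_fibre_one sub] by simp
  have "F z1 = s" if s: "s \<in> {1, -1}" for s
  proof -
    obtain y where "y \<in> topspace Y" "p y = Gam" "F y = s"
      using F_attains_sign_over_one[OF s] by blast
    then have "y \<in> {z1, z2}"
      using fibre by blast
    then show ?thesis
      using eq \<open>F y = s\<close> by auto
  qed
  then show False
    by (metis insertCI one_neq_neg_one)
qed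

lemma points_separated:
  assumes y: "y1 \<in> topspace Y" "y2 \<in> topspace Y" "y1 \<noteq> y2" and p_eq: "p y1 = p y2"
  shows "\<exists>h\<in>carrier G. F (T h y1) \<noteq> F (T h y2)"
proof -
  have sub: "{y1, y2} \<subseteq> {y \<in> topspace Y. p y = p y1}"
    using y p_eq by auto
  have "card {y \<in> topspace Y. p y = p y1} \<noteq> 1"
  proof
    assume card1: "card {y \<in> topspace Y. p y = p y1} = 1"
    then have "finite {y \<in> topspace Y. p y = p y1}"
      by (intro card_ge_0_finite) simp
    then have "card {y1, y2} \<le> 1"
      using card_mono[OF _ sub] card1 by simp
    then show False
      using y(3) by simp
  qed
  then obtain g where g: "g \<in> carrier G" "p y1 = invlim_pt g"
    using card_fibre_off_orbit[OF p_in[OF y(1)]] by blast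
  define z1 z2 where "z1 = T (inv g) y1" and "z2 = T (inv g) y2"
  have z: "z1 \<in> topspace Y" "z2 \<in> topspace Y"
    unfolding z1_def z2_def using y g T_in by auto
  have "p z1 = Gam" "p z2 = Gam"
    unfolding z1_def z2_def using g y p_eq p_equivariant invlim_act_pt[of "inv g" g] invlim_pt_one
    by auto
  moreover have "T g z1 = y1" "T g z2 = y2"
    unfolding z1_def z2_def using T_inv_cancel[of "inv g"] g y by simp_all
  then have "z1 \<noteq> z2"
    using y(3) by auto
  ultimately have "F z1 \<noteq> F z2"
    using F_inj_on_fibre_one[OF z] by simp
  then show ?thesis
    unfolding z1_def z2_def using g by blast
qed

lemma F_T_eq:
  assumes "g \<in> carrier G" "y \<in> topspace Y" "invlim_act G g (p y) \<noteq> Gam"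
  shows "F (T g y) = (if in_translated_Xplus (inv g) (p y) then 1 else -1)"
  using assms F_eq[OF T_in] p_equivariant invlim_act_Xplus_iff[OF _ p_in] unfolding fsign_def by simp

lemma T_cont: "g \<in> carrier G \<Longrightarrow> continuous_map Y Y (T g)"
  using action unfolding continuous_action_def by blast

lemma card_F_patterns_off_orbit:
  assumes S: "finite S" "S \<subseteq> carrier G"
  shows "card ((\<lambda>y. restrict (\<lambda>g. F (T g y)) S) `
      {y \<in> topspace Y. \<forall>g\<in>S. p y \<noteq> invlim_pt (inv g)}) \<le> (card S + 1) ^ 4"
proof -
  let ?X = "{x \<in> invlim G Gam. \<forall>b\<in>m_inv G ` S. x \<noteq> invlim_pt b}"
  let ?pattern = "\<lambda>x. restrict (\<lambda>b. in_translated_Xplus b x) (m_inv G ` S)"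
  define \<Psi> where "\<Psi> P = restrict (\<lambda>g. if P (inv g) then 1 else - 1 :: real) S" for P
  have "(\<lambda>y. restrict (\<lambda>g. F (T g y)) S) ` {y \<in> topspace Y. \<forall>g\<in>S. p y \<noteq> invlim_pt (inv g)}
      \<subseteq> \<Psi> ` ?pattern ` ?X"
  proof (rule image_subsetI)
    fix y assume y: "y \<in> {y \<in> topspace Y. \<forall>g\<in>S. p y \<noteq> invlim_pt (inv g)}"
    have "invlim_act G g (p y) \<noteq> Gam" if "g \<in> S" for g
      using y that S(2) invlim_act_eq_Gam_iff[OF _ p_in] by blast
    then have "restrict (\<lambda>g. F (T g y)) S = \<Psi> (?pattern (p y))"
      unfolding \<Psi>_def using y S(2) F_T_eq by (intro restrict_ext) auto
    moreover have "p y \<in> ?X"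
      using y p_in by blast
    ultimately show "restrict (\<lambda>g. F (T g y)) S \<in> \<Psi> ` ?pattern ` ?X"
      by blast
  qed
  moreover have "finite (?pattern ` ?X)"
    by (rule finite_subset[of _ "m_inv G ` S \<rightarrow>\<^sub>E UNIV"]) (use S(1) in \<open>auto intro: finite_PiE\<close>)
  ultimately have "card ((\<lambda>y. restrict (\<lambda>g. F (T g y)) S) `
      {y \<in> topspace Y. \<forall>g\<in>S. p y \<noteq> invlim_pt (inv g)}) \<le> card (\<Psi> ` ?pattern ` ?X)"
    by (simp add: card_mono)
  also have "\<dots> \<le> card (?pattern ` ?X)"
    using \<open>finite (?pattern ` ?X)\<close> by (rule card_image_le)
  also have "\<dots> \<le> (card (m_inv G ` S) + 1) ^ 4"
    using S by (intro card_translated_Xplus_patterns) auto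
  also have "\<dots> \<le> (card S + 1) ^ 4"
    using S(1) by (simp add: card_image_le)
  finally show ?thesis .
qed

lemma F_T_over_orbit:
  assumes g: "g \<in> carrier G" "g0 \<in> carrier G" "g \<noteq> g0"
    and y: "y \<in> topspace Y" "p y = invlim_pt (inv g0)"
  shows "F (T g y) = fsign G Gam \<gamma> (invlim_pt (g \<otimes> inv g0))"
proof -
  have "p (T g y) = invlim_pt (g \<otimes> inv g0)"
    using p_equivariant[OF g(1) y(1)] y(2) invlim_act_pt g by simp
  moreover have "g \<otimes> inv g0 \<noteq> \<one>"
  proof
    assume "g \<otimes> inv g0 = \<one>"
    then have "inv (inv g0) = g"
      using inv_equality[of g "inv g0"] g by simp
    then show False
      using g by simp
  qed
  then have "invlim_pt (g \<otimes> inv g0) \<noteq> Gam"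
    using invlim_pt_inj[of "g \<otimes> inv g0" \<one>] invlim_pt_one g by auto
  ultimately show ?thesis
    using F_eq T_in[OF g(1) y(1)] by simp
qed

lemma card_F_patterns_on_orbit:
  assumes S: "finite S" "S \<subseteq> carrier G"
  shows "card ((\<lambda>y. restrict (\<lambda>g. F (T g y)) S) `
      {y \<in> topspace Y. \<exists>g\<in>S. p y = invlim_pt (inv g)}) \<le> 2 * card S"
proof -
  define \<Psi> where "\<Psi> = (\<lambda>(g0, v). restrict
      (\<lambda>g. if g = g0 then v else fsign G Gam \<gamma> (invlim_pt (g \<otimes> inv g0))) S)"
  have "(\<lambda>y. restrict (\<lambda>g. F (T g y)) S) ` {y \<in> topspace Y. \<exists>g\<in>S. p y = invlim_pt (inv g)}
      \<subseteq> \<Psi> ` (S \<times> {1, -1})"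
  proof (rule image_subsetI)
    fix y assume "y \<in> {y \<in> topspace Y. \<exists>g\<in>S. p y = invlim_pt (inv g)}"
    then obtain g0 where y: "y \<in> topspace Y" and g0: "g0 \<in> S" "p y = invlim_pt (inv g0)"
      by blast
    have "F (T g y) = fsign G Gam \<gamma> (invlim_pt (g \<otimes> inv g0))" if "g \<in> S" "g \<noteq> g0" for g
      using F_T_over_orbit[OF _ _ that(2) y g0(2)] that(1) g0(1) S(2) by blast
    then have "restrict (\<lambda>g. F (T g y)) S = \<Psi> (g0, F (T g0 y))"
      unfolding \<Psi>_def prod.case by (intro restrict_ext) auto
    moreover have "F (T g0 y) \<in> {1, -1}"
      using F_values T_in y g0 S(2) by blast
    ultimately show "restrict (\<lambda>g. F (T g y)) S \<in> \<Psi> ` (S \<times> {1, -1})"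
      using g0(1) by blast
  qed
  then have "card ((\<lambda>y. restrict (\<lambda>g. F (T g y)) S) `
      {y \<in> topspace Y. \<exists>g\<in>S. p y = invlim_pt (inv g)}) \<le> card (\<Psi> ` (S \<times> {1, -1}))"
    using S(1) by (intro card_mono) auto
  also have "\<dots> \<le> card (S \<times> {1, -1 :: real})"
    using S(1) by (intro card_image_le) simp
  finally show ?thesis
    by (simp add: card_cartesian_product)
qed

lemma card_F_patterns:
  assumes "finite S" "S \<subseteq> carrier G"
  shows "card ((\<lambda>y. restrict (\<lambda>g. F (T g y)) S) ` topspace Y) \<le> 2 * (card S + 1) ^ 4"
proof -
  let ?pattern = "\<lambda>y. restrict (\<lambda>g. F (T g y)) S"
  have split: "?pattern ` {y \<in> topspace Y. \<forall>g\<in>S. p y \<noteq> invlim_pt (inv g)} \<union>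
      ?pattern ` {y \<in> topspace Y. \<exists>g\<in>S. p y = invlim_pt (inv g)} = ?pattern ` topspace Y"
    unfolding image_Un[symmetric] by (rule arg_cong[where f = "image ?pattern"]) blast
  have "card (?pattern ` topspace Y) \<le>
      card (?pattern ` {y \<in> topspace Y. \<forall>g\<in>S. p y \<noteq> invlim_pt (inv g)}) +
      card (?pattern ` {y \<in> topspace Y. \<exists>g\<in>S. p y = invlim_pt (inv g)})"
    unfolding split[symmetric] by (rule card_Un_le)
  also have "\<dots> \<le> (card S + 1) ^ 4 + 2 * card S"
    using card_F_patterns_off_orbit[OF assms] card_F_patterns_on_orbit[OF assms] by (rule add_mono)
  also have "\<dots> \<le> 2 * (card S + 1) ^ 4"
  proof -
    have "2 * card S \<le> (card S + 1)\<^sup>2"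
      by (simp add: power2_eq_square)
    also have "\<dots> \<le> (card S + 1) ^ 4"
      by (rule power_increasing) simp_all
    finally show ?thesis
      by simp
  qed
  finally show ?thesis .
qed

end

section \<open>Nullness\<close>

context McMahon_null
begin

definition observable :: "nat \<times> 'a \<Rightarrow> 'b \<Rightarrow> 'a set \<times> real" where
  "observable c y = (p y (fst c), F (T (snd c) y))"

lemma observable_level_open:
  assumes "c \<in> UNIV \<times> carrier G"
  shows "openin Y {y \<in> topspace Y. observable c y = v}"
proof -
  have h: "snd c \<in> carrier G"
    using assms by auto
  have "{y \<in> topspace Y. observable c y = v} = {y \<in> topspace Y. p y (fst c) = fst v} \<inter>
      {y \<in> topspace Y. T (snd c) y \<in> {z \<in> topspace Y. F z = snd v}}"
    unfolding observable_def using T_in[OF h] by (auto simp: prod_eq_iff)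
  moreover have "openin Y ({y \<in> topspace Y. p y (fst c) = fst v} \<inter>
      {y \<in> topspace Y. T (snd c) y \<in> {z \<in> topspace Y. F z = snd v}})"
    using p_level_clopen(1) openin_continuous_map_preimage[OF T_cont[OF h] F_level_clopen(1)]
    by (rule openin_Int)
  ultimately show ?thesis
    by simp
qed

lemma observables_separate_points:
  assumes y: "y \<in> topspace Y" "y' \<in> topspace Y" "y \<noteq> y'"
  shows "\<exists>c\<in>UNIV \<times> carrier G. observable c y \<noteq> observable c y'"
proof (cases "p y = p y'")
  case True
  then obtain h where "h \<in> carrier G" "F (T h y) \<noteq> F (T h y')"
    using points_separated[OF y True] by blast
  then show ?thesis
    by (intro bexI[of _ "(0, h)"]) (auto simp: observable_def)
next
  case False
  then obtain N where "p y N \<noteq> p y' N"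
    by blast
  then show ?thesis
    by (intro bexI[of _ "(N, \<one>)"]) (auto simp: observable_def)
qed

lemma cells_refine_cover:
  assumes "\<And>U. U \<in> \<U> \<Longrightarrow> openin Y U" "topspace Y \<subseteq> \<Union>\<U>"
  obtains Ns H where "finite Ns" "finite H" "H \<subseteq> carrier G"
    "\<forall>y\<in>topspace Y. \<exists>U\<in>\<U>. \<forall>y'\<in>topspace Y.
       (\<forall>N\<in>Ns. p y' N = p y N) \<and> (\<forall>h\<in>H. F (T h y') = F (T h y)) \<longrightarrow> y' \<in> U"
proof -
  obtain C where C: "C \<subseteq> UNIV \<times> carrier G" "finite C"
    "\<forall>y\<in>topspace Y. \<exists>U\<in>\<U>. {y' \<in> topspace Y. \<forall>c\<in>C. observable c y' = observable c y} \<subseteq> U"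
    using compact_space_cells_refine_cover[OF compact_Y observable_level_open
        observables_separate_points assms] by blast
  have "\<exists>U\<in>\<U>. \<forall>y'\<in>topspace Y.
      (\<forall>N\<in>fst ` C. p y' N = p y N) \<and> (\<forall>h\<in>snd ` C. F (T h y') = F (T h y)) \<longrightarrow> y' \<in> U"
    if y: "y \<in> topspace Y" for y
  proof -
    obtain U where "U \<in> \<U>" and U: "{y' \<in> topspace Y. \<forall>c\<in>C. observable c y' = observable c y} \<subseteq> U"
      using C(3) y by blast
    have "y' \<in> U" if y': "y' \<in> topspace Y" "\<forall>N\<in>fst ` C. p y' N = p y N"
      "\<forall>h\<in>snd ` C. F (T h y') = F (T h y)" for y'
    proof -
      have "observable c y' = observable c y" if "c \<in> C" for c
        using that y'(2,3) unfolding observable_def by simp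
      then show ?thesis
        using U y'(1) by blast
    qed
    then show ?thesis
      using \<open>U \<in> \<U>\<close> by blast
  qed
  then show thesis
    using C(1,2) by (intro that[of "fst ` C" "snd ` C"]) auto
qed

lemma card_cell_labels:
  assumes "finite Ns" "finite S" "S \<subseteq> carrier G"
  shows "finite ((\<lambda>y. (restrict (p y) Ns, restrict (\<lambda>g. F (T g y)) S)) ` topspace Y)"
    "card ((\<lambda>y. (restrict (p y) Ns, restrict (\<lambda>g. F (T g y)) S)) ` topspace Y)
       \<le> card (\<Pi>\<^sub>E N\<in>Ns. rcosets (Gam N)) * (2 * (card S + 1) ^ 4)"
proof -
  let ?patterns = "(\<lambda>y. restrict (\<lambda>g. F (T g y)) S) ` topspace Y"
  have sub: "(\<lambda>y. (restrict (p y) Ns, restrict (\<lambda>g. F (T g y)) S)) ` topspace Y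
      \<subseteq> (\<Pi>\<^sub>E N\<in>Ns. rcosets (Gam N)) \<times> ?patterns"
    using p_in unfolding invlim_def by auto
  have fin: "finite ((\<Pi>\<^sub>E N\<in>Ns. rcosets (Gam N)) \<times> ?patterns)"
  proof -
    have "?patterns \<subseteq> S \<rightarrow>\<^sub>E {1, -1}"
    proof (rule image_subsetI)
      fix y assume y: "y \<in> topspace Y"
      have "F (T g y) \<in> {1, -1}" if "g \<in> S" for g
        using F_values T_in that assms(3) y by blast
      then show "restrict (\<lambda>g. F (T g y)) S \<in> S \<rightarrow>\<^sub>E {1, -1}"
        by (simp add: restrict_PiE_iff)
    qed
    then show ?thesis
      using assms(1,2) finite_rcosets by (auto intro!: finite_PiE dest: finite_subset)
  qed
  then show "finite ((\<lambda>y. (restrict (p y) Ns, restrict (\<lambda>g. F (T g y)) S)) ` topspace Y)"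
    using sub by (rule finite_subset[rotated])
  have "card ((\<lambda>y. (restrict (p y) Ns, restrict (\<lambda>g. F (T g y)) S)) ` topspace Y)
      \<le> card (\<Pi>\<^sub>E N\<in>Ns. rcosets (Gam N)) * card ?patterns"
    using card_mono[OF fin sub] by (simp add: card_cartesian_product)
  also have "\<dots> \<le> card (\<Pi>\<^sub>E N\<in>Ns. rcosets (Gam N)) * (2 * (card S + 1) ^ 4)"
    using card_F_patterns[OF assms(2,3)] by (rule mult_le_mono2)
  finally show "card ((\<lambda>y. (restrict (p y) Ns, restrict (\<lambda>g. F (T g y)) S)) ` topspace Y)
       \<le> card (\<Pi>\<^sub>E N\<in>Ns. rcosets (Gam N)) * (2 * (card S + 1) ^ 4)" .
qed

lemma translate_preserves_labels:
  assumes "g \<in> carrier G" "H \<subseteq> carrier G" "y \<in> topspace Y" "y0 \<in> topspace Y"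
    and "\<forall>N\<in>Ns. p y N = p y0 N" "\<forall>h\<in>H. F (T (h \<otimes> g) y) = F (T (h \<otimes> g) y0)"
  shows "(\<forall>N\<in>Ns. p (T g y) N = p (T g y0) N) \<and> (\<forall>h\<in>H. F (T h (T g y)) = F (T h (T g y0)))"
  using assms p_equivariant T_mult unfolding invlim_act_def by (simp add: subset_iff)

lemma min_subcover_cover_join_le_labels:
  assumes s: "\<And>i. s i \<in> carrier G" and Ns: "finite Ns" and H: "finite H" "H \<subseteq> carrier G"
    and cells: "\<forall>y\<in>topspace Y. \<exists>U\<in>\<U>. \<forall>y'\<in>topspace Y.
       (\<forall>N\<in>Ns. p y' N = p y N) \<and> (\<forall>h\<in>H. F (T h y') = F (T h y)) \<longrightarrow> y' \<in> U"
  shows "min_subcover Y (cover_join G T s \<U> n)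
    \<le> card (\<Pi>\<^sub>E N\<in>Ns. rcosets (Gam N)) * (2 * (card H * n + 1) ^ 4)"
proof -
  define S where "S = (\<lambda>(h, i). h \<otimes> s i) ` (H \<times> {1..n})"
  have S: "finite S" "S \<subseteq> carrier G"
    unfolding S_def using H s by auto
  have "card S \<le> card H * n"
    unfolding S_def using card_image_le[of "H \<times> {1..n}"] H(1) by (simp add: card_cartesian_product)
  let ?label = "\<lambda>y. (restrict (p y) Ns, restrict (\<lambda>g. F (T g y)) S)"
  have "min_subcover Y (cover_join G T s \<U> n) \<le> card (?label ` topspace Y)"
  proof (rule min_subcover_cover_join_le[OF is_group action s card_cell_labels(1)[OF Ns S(1,2)]])
    fix y0 i assume y0: "y0 \<in> topspace Y" and i: "i \<in> {1..n}"
    obtain U where "U \<in> \<U>" and U: "\<forall>y'\<in>topspace Y. (\<forall>N\<in>Ns. p y' N = p (T (s i) y0) N) \<and>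
        (\<forall>h\<in>H. F (T h y') = F (T h (T (s i) y0))) \<longrightarrow> y' \<in> U"
      using cells T_in[OF s y0] by blast
    have "T (s i) y \<in> U" if y: "y \<in> topspace Y" and label: "?label y = ?label y0" for y
    proof -
      have "restrict (p y) Ns = restrict (p y0) Ns"
        "restrict (\<lambda>g. F (T g y)) S = restrict (\<lambda>g. F (T g y0)) S"
        using label by simp_all
      then have "\<forall>N\<in>Ns. p y N = p y0 N" "\<forall>g\<in>S. F (T g y) = F (T g y0)"
        by (metis restrict_apply')+
      moreover have "h \<otimes> s i \<in> S" if "h \<in> H" for h
        unfolding S_def using i that by (intro image_eqI[of _ _ "(h, i)"]) auto
      ultimately have "(\<forall>N\<in>Ns. p (T (s i) y) N = p (T (s i) y0) N) \<and>
          (\<forall>h\<in>H. F (T h (T (s i) y)) = F (T h (T (s i) y0)))"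
        using translate_preserves_labels[OF s H(2) y y0] by blast
      then show ?thesis
        using U T_in[OF s y] by blast
    qed
    then show "\<exists>U\<in>\<U>. \<forall>y\<in>topspace Y. ?label y = ?label y0 \<longrightarrow> T (s i) y \<in> U"
      using \<open>U \<in> \<U>\<close> by blast
  qed
  also have "\<dots> \<le> card (\<Pi>\<^sub>E N\<in>Ns. rcosets (Gam N)) * (2 * (card S + 1) ^ 4)"
    by (rule card_cell_labels(2)[OF Ns S(1,2)])
  also have "\<dots> \<le> card (\<Pi>\<^sub>E N\<in>Ns. rcosets (Gam N)) * (2 * (card H * n + 1) ^ 4)"
    using \<open>card S \<le> card H * n\<close> by (intro mult_le_mono2) (simp add: power_mono)
  finally show ?thesis .
qed

lemma null: "null_action G Y T"
  unfolding null_action_def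
proof (intro allI impI, elim conjE)
  fix s :: "nat \<Rightarrow> 'a" and \<U> :: "'b set set"
  assume s: "\<forall>n. s n \<in> carrier G" and "finite \<U>"
    and open_cover: "\<forall>U\<in>\<U>. openin Y U" "\<Union>\<U> = topspace Y"
  obtain Ns H where NsH: "finite Ns" "finite H" "H \<subseteq> carrier G"
    "\<forall>y\<in>topspace Y. \<exists>U\<in>\<U>. \<forall>y'\<in>topspace Y.
       (\<forall>N\<in>Ns. p y' N = p y N) \<and> (\<forall>h\<in>H. F (T h y') = F (T h y)) \<longrightarrow> y' \<in> U"
  proof -
    have "\<And>U. U \<in> \<U> \<Longrightarrow> openin Y U" "topspace Y \<subseteq> \<Union>\<U>"
      using open_cover by auto
    from cells_refine_cover[OF this] show thesis
      using that by blast
  qed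
  define R where "R = card (\<Pi>\<^sub>E N\<in>Ns. rcosets (Gam N))"
  have "min_subcover Y (cover_join G T s \<U> n) \<le> (R * 2 * (card H + 1) ^ 4) * (n + 1) ^ 4" for n
  proof -
    have "min_subcover Y (cover_join G T s \<U> n) \<le> R * (2 * (card H * n + 1) ^ 4)"
      unfolding R_def using s by (intro min_subcover_cover_join_le_labels NsH) auto
    also have "\<dots> \<le> R * (2 * ((card H + 1) * (n + 1)) ^ 4)"
      by (intro mult_le_mono2 power_mono) (simp_all add: algebra_simps)
    also have "\<dots> = (R * 2 * (card H + 1) ^ 4) * (n + 1) ^ 4"
      by (simp only: power_mult_distrib ac_simps)
    finally show ?thesis .
  qed
  then show "limsup (\<lambda>n. ereal (ln (real (min_subcover Y (cover_join G T s \<U> n))) / real n)) = 0"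
    by (rule limsup_ln_div_eq_0_if_poly_bounded)
qed

end

theorem theorem4p3:
  fixes G :: "('a, 'c) monoid_scheme"
    and Gam :: "nat \<Rightarrow> 'a set"
    and \<gamma> :: "nat \<Rightarrow> 'a"
    and Y :: "'b topology"
    and T :: "'a \<Rightarrow> 'b \<Rightarrow> 'b"
    and p :: "'b \<Rightarrow> (nat \<Rightarrow> 'a set)"
  assumes "group G"
    and "countable (carrier G)" and "infinite (carrier G)"
    and "residually_finite G"
    and "\<forall>n. Gam n \<lhd> G"
    and "\<forall>n. finite (rcosets\<^bsub>G\<^esub> (Gam n))"
    and "\<forall>n. Gam (Suc n) \<subset> Gam n"
    and "(\<Inter>n. Gam n) = {\<one>\<^bsub>G\<^esub>}"
    and "\<forall>n. card {Gam (Suc n) #>\<^bsub>G\<^esub> g | g. g \<in> Gam n} > 2"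
    and "\<forall>n\<ge>1. \<gamma> n \<in> Gam (n - 1) - Gam n"
    and "is_McMahon_extension G (invlim_top G Gam) (invlim_act G) Gam (fsign G Gam \<gamma>) Y T p"
  shows "null_action G Y T"
proof -
  obtain F where F: "continuous_map Y euclideanreal F"
    "\<forall>y\<in>topspace Y. p y \<noteq> Gam \<longrightarrow> F y = fsign G Gam \<gamma> (p y)"
    using assms(11) unfolding is_McMahon_extension_def by blast
  have "marked_chain G Gam \<gamma>"
    by (intro marked_chain.intro normal_chain.intro normal_chain_axioms.intro
        marked_chain_axioms.intro assms(1)) (use assms(5,7-10) in auto)
  then interpret McMahon_null G Gam \<gamma> Y T p F
    by (rule McMahon_null.intro, intro McMahon_null_axioms.intro) (use assms F in auto)
  show ?thesis
    by (rule null)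
qed

end
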